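(* Let $N\geq 1$ be an integer and let $\mathrm{Mat}_2(\mathbb{Z},N)$ denote the set of $2\times 2$ matrices with entries in $[-N,N]\cap\mathbb{Z}$. Write \[ A=\begin{pmatrix} a_1 & a_2\\ a_3 & a_4\end{pmatrix},\qquad B=\begin{pmatrix} b_1 & b_2\\ b_3 & b_4\end{pmatrix}, \] and set \[ \Gamma=\{(A,B)\in\mathrm{Mat}_2(\mathbb{Z},N)^2 : AB=BA\},\qquad \Gamma'=\{(A,B)\in\Gamma : a_2b_2a_3b_3\neq 0\}. \] Then \[ |\Gamma\setminus\Gamma'| = 2(2N)^5 + O(N^4\log N). \]
   Context: The implied constant in the $O$-term is absolute. The set $\Gamma\setminus\Gamma'$ consists of the commuting pairs of $2\times 2$ integer matrices with entries bounded by $N$ in absolute value for which at least one of the off-diagonal entries $a_2,a_3,b_2,b_3$ vanishes. *)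

theory Defs
  imports "HOL-Analysis.Analysis" "HOL-Library.Landau_Symbols"
begin

text \<open>2x2 integer matrices with entries in [-N,N]. Index 1 = first row/column,
  so A$1$2 = a_2 and A$2$1 = a_3.\<close>
definition Mat2 :: "int \<Rightarrow> (int^2^2) set" where
  "Mat2 N = {A. \<forall>i j. \<bar>A$i$j\<bar> \<le> N}"

definition Gamma :: "int \<Rightarrow> ((int^2^2) \<times> (int^2^2)) set" where
  "Gamma N = {(A,B). A \<in> Mat2 N \<and> B \<in> Mat2 N \<and> A ** B = B ** A}"

definition Gamma' :: "int \<Rightarrow> ((int^2^2) \<times> (int^2^2)) set" where
  "Gamma' N = {(A,B) \<in> Gamma N. A$1$2 * B$1$2 * A$2$1 * B$2$1 \<noteq> 0}"

end

(*
  If neither A nor B is scalar, the commutation relations a2 b3 = b2 a3,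
  b2 (a1 - a4) = a2 (b1 - b4), a3 (b1 - b4) = b3 (a1 - a4) together with a2 b2 a3 b3 = 0
  force A and B to be both lower or both upper triangular, and transposition exchanges
  the two cases.  Pairs with a scalar component give exactly 2(2N+1)^5 - (2N+1)^2
  elements, the main term.  A commuting lower triangular pair with A non-scalar is
  determined by a4, b4 and the quadruple (a3, b3, a1 - a4, b1 - b4), the entries of a
  singular 2x2 matrix with nonzero first column and entries bounded by 2N.  Such a
  matrix factors as a column (u, v) times a row (a, b) with a >= 1; grouping by
  m = max |u| |v| bounds the number of matrices with entries at most M by
  36 M^2 (1 + 1/2 + ... + 1/M) = O(M^2 log M).
*)

theory Submission
  imports Defs "HOL-Real_Asymp.Real_Asymp"
begin

definition mat2 :: "'a \<Rightarrow> 'a \<Rightarrow> 'a \<Rightarrow> 'a \<Rightarrow> 'a^2^2" where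
  "mat2 a b c d = (\<chi> i j. if i = 1 then (if j = 1 then a else b) else (if j = 1 then c else d))"

lemma mat2_nth [simp]:
  "mat2 a b c d $ 1 $ 1 = a" "mat2 a b c d $ 1 $ 2 = b"
  "mat2 a b c d $ 2 $ 1 = c" "mat2 a b c d $ 2 $ 2 = d"
  by (simp_all add: mat2_def)

lemma mat2_entries: "A = mat2 (A$1$1) (A$1$2) (A$2$1) (A$2$2)"
  by (simp add: vec_eq_iff forall_2 mat2_def)

lemma mat2_eq_iff: "mat2 a b c d = mat2 a' b' c' d' \<longleftrightarrow> a = a' \<and> b = b' \<and> c = c' \<and> d = d'"
  by (metis mat2_nth)

lemma mat2_mult:
  "mat2 a b c d ** mat2 e f g h = mat2 (a*e + b*g) (a*f + b*h) (c*e + d*g) (c*f + d*h)"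
  by (simp add: matrix_matrix_mult_def vec_eq_iff forall_2 sum_2 mat2_def)

lemma mat_eq_mat2: "mat s = mat2 s 0 0 s"
  by (simp add: vec_eq_iff forall_2 mat_def mat2_def)

lemma mat2_in_range_mat_iff: "mat2 a b c d \<in> range mat \<longleftrightarrow> b = 0 \<and> c = 0 \<and> a = d"
  by (auto simp: mat_eq_mat2 mat2_eq_iff)

lemma mat2_mult_commute_iff:
  fixes a1 :: "'a::comm_ring_1"
  shows "mat2 a1 a2 a3 a4 ** mat2 b1 b2 b3 b4 = mat2 b1 b2 b3 b4 ** mat2 a1 a2 a3 a4 \<longleftrightarrow>
    a2 * b3 = b2 * a3 \<and> b2 * (a1 - a4) = a2 * (b1 - b4) \<and> a3 * (b1 - b4) = b3 * (a1 - a4)"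
  unfolding mat2_mult mat2_eq_iff by (auto simp: algebra_simps)

lemma commuting_nonscalar_triangular:
  fixes A B :: "'a::idom^2^2"
  assumes "A ** B = B ** A" "A \<notin> range mat" "B \<notin> range mat"
    and "A$1$2 * B$1$2 * A$2$1 * B$2$1 = 0"
  shows "(A$1$2 = 0 \<and> B$1$2 = 0) \<or> (A$2$1 = 0 \<and> B$2$1 = 0)"
proof -
  obtain a1 a2 a3 a4 b1 b2 b3 b4 where A: "A = mat2 a1 a2 a3 a4" and B: "B = mat2 b1 b2 b3 b4"
    by (metis mat2_entries)
  have commute: "a2 * b3 = b2 * a3" "b2 * (a1 - a4) = a2 * (b1 - b4)" "a3 * (b1 - b4) = b3 * (a1 - a4)"
    using assms(1) by (simp_all add: A B mat2_mult_commute_iff)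
  have nonscalar: "\<not> (a2 = 0 \<and> a3 = 0 \<and> a1 = a4)" "\<not> (b2 = 0 \<and> b3 = 0 \<and> b1 = b4)"
    using assms(2,3) by (simp_all add: A B mat2_in_range_mat_iff)
  have "a2 = 0 \<and> b2 = 0" if "a2 = 0 \<or> b2 = 0"
    using that commute(1,2) nonscalar by auto
  moreover have "a3 = 0 \<and> b3 = 0" if "a3 = 0 \<or> b3 = 0"
    using that commute(1,3) nonscalar by auto
  moreover have "a2 = 0 \<or> b2 = 0 \<or> a3 = 0 \<or> b3 = 0"
    using assms(4) by (simp add: A B)
  ultimately have "(a2 = 0 \<and> b2 = 0) \<or> (a3 = 0 \<and> b3 = 0)"
    by blast
  then show ?thesis by (simp add: A B)
qed

lemma mat_mult_commute:
  fixes A :: "'a::comm_semiring_1^'n^'n"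
  shows "mat s ** A = A ** mat s"
  by (simp add: matrix_matrix_mult_def mat_def vec_eq_iff if_distrib if_distribR mult.commute cong: if_cong)

lemma mat2_in_Mat2_iff:
  "mat2 a b c d \<in> Mat2 N \<longleftrightarrow> \<bar>a\<bar> \<le> N \<and> \<bar>b\<bar> \<le> N \<and> \<bar>c\<bar> \<le> N \<and> \<bar>d\<bar> \<le> N"
  by (auto simp: Mat2_def forall_2)

lemma mat_in_Mat2_iff: "N \<ge> 0 \<Longrightarrow> mat s \<in> Mat2 N \<longleftrightarrow> \<bar>s\<bar> \<le> N"
  by (simp add: mat_eq_mat2 mat2_in_Mat2_iff)

lemma transpose_in_Mat2_iff: "transpose A \<in> Mat2 N \<longleftrightarrow> A \<in> Mat2 N"
  by (auto simp: Mat2_def transpose_def)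

definition singular_quads :: "nat \<Rightarrow> (int \<times> int \<times> int \<times> int) set" where
  "singular_quads M = {(x, y, z, w). \<bar>x\<bar> \<le> M \<and> \<bar>y\<bar> \<le> M \<and> \<bar>z\<bar> \<le> M \<and> \<bar>w\<bar> \<le> M \<and>
     x * w = y * z \<and> (x, z) \<noteq> (0, 0)}"

lemma finite_singular_quads: "finite (singular_quads M)"
  by (rule finite_subset[of _ "{-int M..M} \<times> {-int M..M} \<times> {-int M..M} \<times> {-int M..M}"])
    (auto simp: singular_quads_def abs_le_iff)

lemma coprime_cross_mult_eq:
  fixes u v y w :: int
  assumes "coprime u v" "u * w = y * v"
  shows "\<exists>b. y = u * b \<and> w = v * b"
proof (cases "u = 0")
  case True
  then have "\<bar>v\<bar> = 1" using assms(1) by simp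
  then show ?thesis using assms(2) True by (intro exI[of _ "v * w"]) (auto simp: abs_if split: if_splits)
next
  case False
  have "u dvd y * v" using assms(2) by (metis dvd_triv_left)
  then obtain b where "y = u * b" using assms(1) by (metis coprime_dvd_mult_left_iff dvdE)
  then show ?thesis using assms(2) False by (intro exI[of _ b]) (simp add: algebra_simps)
qed

lemma rank_one_factorization:
  fixes x y z w :: int
  assumes "x * w = y * z" "(x, z) \<noteq> (0, 0)"
  shows "\<exists>u v a b. a \<ge> 1 \<and> x = u * a \<and> z = v * a \<and> y = u * b \<and> w = v * b"
proof -
  define g where "g = gcd x z"
  have "g > 0" using assms(2) by (simp add: g_def)
  define u v where "u = x div g" and "v = z div g"
  have x: "x = u * g" and z: "z = v * g" by (simp_all add: g_def u_def v_def)
  have "coprime u v" using assms(2) unfolding u_def v_def g_def by (metis div_gcd_coprime)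
  moreover have "u * w = y * v" using assms(1) \<open>g > 0\<close> by (simp add: x z algebra_simps)
  ultimately obtain b where "y = u * b \<and> w = v * b" using coprime_cross_mult_eq by blast
  then show ?thesis using x z \<open>g > 0\<close> by (intro exI[of _ u] exI[of _ v] exI[of _ g] exI[of _ b]) auto
qed

lemma card_symmetric_int_interval: "card {-int k..int k} = 2 * k + 1"
  by (simp add: nat_add_distrib nat_mult_distrib)

definition square_boundary :: "nat \<Rightarrow> (int \<times> int) set" where
  "square_boundary m = {-int m, int m} \<times> {-int m..int m} \<union> {-int m..int m} \<times> {-int m, int m}"

lemma finite_square_boundary [simp]: "finite (square_boundary m)"
  by (simp add: square_boundary_def)

lemma card_square_boundary_le: "card (square_boundary m) \<le> 4 * (2 * m + 1)"
proof -
  have corners: "card {-int m, int m} \<le> 2"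
    by (rule card_insert_le_m1) auto
  have "card (square_boundary m)
      \<le> card ({-int m, int m} \<times> {-int m..int m}) + card ({-int m..int m} \<times> {-int m, int m})"
    unfolding square_boundary_def by (rule card_Un_le)
  also have "\<dots> \<le> 2 * (2 * m + 1) + (2 * m + 1) * 2"
    unfolding card_cartesian_product card_symmetric_int_interval
    by (intro add_mono mult_right_mono mult_left_mono corners) simp_all
  finally show ?thesis by simp
qed

text \<open>A parameter \<open>(m, (u, v), a, b)\<close> stands for the matrix with column \<open>(u, v)\<close> and row
  \<open>(a, b)\<close>, where \<open>m = max \<bar>u\<bar> \<bar>v\<bar>\<close>; the sign is normalised by \<open>a \<ge> 1\<close>.\<close>

definition rank_one_params :: "nat \<Rightarrow> (nat \<times> (int \<times> int) \<times> int \<times> int) set" where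
  "rank_one_params M =
     (SIGMA m:{1..M}. square_boundary m \<times> {1..int (M div m)} \<times> {-int (M div m)..int (M div m)})"

lemma le_nat_div_of_mult_le: "0 < m \<Longrightarrow> a * int m \<le> int M \<Longrightarrow> a \<le> int (M div m)"
  using zdiv_mono1[of "a * int m" "int M" "int m"] by (simp add: zdiv_int)

lemma singular_quads_subset:
  "singular_quads M \<subseteq> (\<lambda>(m, (u, v), a, b). (u * a, u * b, v * a, v * b)) ` rank_one_params M"
proof (clarify)
  fix x y z w assume "(x, y, z, w) \<in> singular_quads M"
  then have bounds: "\<bar>x\<bar> \<le> M" "\<bar>y\<bar> \<le> M" "\<bar>z\<bar> \<le> M" "\<bar>w\<bar> \<le> M"
    and "x * w = y * z" "(x, z) \<noteq> (0, 0)"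
    by (auto simp: singular_quads_def)
  then obtain u v a b where a: "a \<ge> 1" and uvab: "x = u * a" "z = v * a" "y = u * b" "w = v * b"
    using rank_one_factorization by blast
  define m where "m = nat (max \<bar>u\<bar> \<bar>v\<bar>)"
  have "m \<ge> 1" using \<open>(x, z) \<noteq> (0, 0)\<close> by (auto simp: m_def uvab)
  have "(u, v) \<in> square_boundary m" by (auto simp: m_def square_boundary_def max_def abs_if)
  have am: "a * int m \<le> int M" and bm: "\<bar>b\<bar> * int m \<le> int M"
    using bounds a by (auto simp: m_def uvab abs_mult max_def mult.commute)
  have "int m \<le> a * int m"
    using a by (simp add: mult_le_cancel_right1)
  then have "m \<le> M"
    using am by linarith
  moreover have "a \<le> int (M div m)" "\<bar>b\<bar> \<le> int (M div m)"
    using am bm \<open>m \<ge> 1\<close> by (simp_all add: le_nat_div_of_mult_le)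
  ultimately have "(m, (u, v), a, b) \<in> rank_one_params M"
    using \<open>m \<ge> 1\<close> \<open>(u, v) \<in> square_boundary m\<close> a
    by (auto simp: rank_one_params_def)
  then show "(x, y, z, w)
      \<in> (\<lambda>(m, (u, v), a, b). (u * a, u * b, v * a, v * b)) ` rank_one_params M"
    by (rule rev_image_eqI) (simp add: uvab)
qed

lemma square_boundary_term_le:
  assumes "1 \<le> m" "m \<le> M"
  shows "real (4 * (2 * m + 1) * ((M div m) * (2 * (M div m) + 1))) \<le> 36 * real M ^ 2 / real m"
proof -
  define q where "q = M div m"
  have "1 \<le> q" "m * q \<le> M"
    using assms by (simp_all add: q_def less_eq_div_iff_mult_less_eq mult.commute)
  have "4 * (2 * m + 1) * (q * (2 * q + 1)) \<le> 4 * (3 * m) * (q * (3 * q))"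
    using \<open>1 \<le> q\<close> assms(1) by (intro mult_mono) auto
  then have "m * (4 * (2 * m + 1) * (q * (2 * q + 1))) \<le> m * (4 * (3 * m) * (q * (3 * q)))"
    by (rule mult_left_mono) simp
  also have "\<dots> = 36 * (m * q) ^ 2"
    by (simp add: power2_eq_square algebra_simps)
  also have "\<dots> \<le> 36 * M ^ 2"
    using \<open>m * q \<le> M\<close> by (simp add: power_mono)
  finally have "real m * real (4 * (2 * m + 1) * (q * (2 * q + 1))) \<le> 36 * real M ^ 2"
    by (metis of_nat_le_iff of_nat_mult of_nat_power of_nat_numeral)
  then show ?thesis
    using assms(1) by (simp add: q_def field_simps)
qed

lemma card_singular_quads_le: "real (card (singular_quads M)) \<le> 36 * real M ^ 2 * harm M"
proof -
  have finite_params: "finite (rank_one_params M)"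
    by (simp add: rank_one_params_def)
  have "card (singular_quads M) \<le> card (rank_one_params M)"
    using card_mono[OF finite_imageI[OF finite_params] singular_quads_subset]
      card_image_le[OF finite_params]
    by (rule le_trans)
  also have "\<dots> = (\<Sum>m=1..M. card (square_boundary m) * ((M div m) * (2 * (M div m) + 1)))"
    by (simp add: rank_one_params_def card_cartesian_product nat_add_distrib nat_mult_distrib)
  also have "\<dots> \<le> (\<Sum>m=1..M. 4 * (2 * m + 1) * ((M div m) * (2 * (M div m) + 1)))"
    by (intro sum_mono mult_right_mono card_square_boundary_le) simp
  finally have "real (card (singular_quads M))
      \<le> (\<Sum>m=1..M. real (4 * (2 * m + 1) * ((M div m) * (2 * (M div m) + 1))))"
    unfolding of_nat_sum[symmetric] of_nat_le_iff .
  also have "\<dots> \<le> (\<Sum>m=1..M. 36 * real M ^ 2 * inverse (real m))"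
    using square_boundary_term_le by (intro sum_mono) (simp add: field_simps)
  also have "\<dots> = 36 * real M ^ 2 * harm M"
    by (simp add: harm_def sum_distrib_left)
  finally show ?thesis .
qed

text \<open>The coordinates are \<open>(a\<^sub>4, b\<^sub>4, a\<^sub>3, b\<^sub>3, a\<^sub>1 - a\<^sub>4, b\<^sub>1 - b\<^sub>4)\<close>.\<close>

definition lower_pair :: "int \<times> int \<times> int \<times> int \<times> int \<times> int \<Rightarrow> (int^2^2) \<times> (int^2^2)" where
  "lower_pair = (\<lambda>(a, b, x, y, z, w). (mat2 (a + z) 0 x a, mat2 (b + w) 0 y b))"

definition lower_params :: "nat \<Rightarrow> (int \<times> int \<times> int \<times> int \<times> int \<times> int) set" where
  "lower_params n = {-int n..int n} \<times> {-int n..int n} \<times> singular_quads (2 * n)"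

lemma lower_triangular_commuting_pair:
  assumes "(A, B) \<in> Gamma (int n)" "A \<notin> range mat" "A$1$2 = 0" "B$1$2 = 0"
  shows "(A, B) \<in> lower_pair ` lower_params n"
proof -
  obtain a1 a3 a4 b1 b3 b4 where A: "A = mat2 a1 0 a3 a4" and B: "B = mat2 b1 0 b3 b4"
    using assms(3,4) mat2_entries by metis
  from assms(1) have bounds: "\<bar>a1\<bar> \<le> n" "\<bar>a3\<bar> \<le> n" "\<bar>a4\<bar> \<le> n"
      "\<bar>b1\<bar> \<le> n" "\<bar>b3\<bar> \<le> n" "\<bar>b4\<bar> \<le> n"
    and "a3 * (b1 - b4) = b3 * (a1 - a4)"
    by (auto simp: Gamma_def A B mat2_in_Mat2_iff mat2_mult_commute_iff)
  moreover have "(a3, a1 - a4) \<noteq> (0, 0)"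
    using assms(2) by (auto simp: A mat2_in_range_mat_iff)
  ultimately have "(a4, b4, a3, b3, a1 - a4, b1 - b4) \<in> lower_params n"
    by (auto simp: lower_params_def singular_quads_def)
  moreover have "(A, B) = lower_pair (a4, b4, a3, b3, a1 - a4, b1 - b4)"
    by (simp add: lower_pair_def A B)
  ultimately show ?thesis by blast
qed

lemma Gamma_diff_Gamma'_subset:
  "Gamma (int n) - Gamma' (int n) \<subseteq>
     mat ` {-int n..int n} \<times> Mat2 (int n) \<union> Mat2 (int n) \<times> mat ` {-int n..int n} \<union>
     lower_pair ` lower_params n \<union> map_prod transpose transpose ` lower_pair ` lower_params n"
proof (rule subrelI)
  fix A B assume AB: "(A, B) \<in> Gamma (int n) - Gamma' (int n)"
  then have Mat2: "A \<in> Mat2 (int n)" "B \<in> Mat2 (int n)" and "A ** B = B ** A"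
    and "A$1$2 * B$1$2 * A$2$1 * B$2$1 = 0"
    by (auto simp: Gamma_def Gamma'_def)
  have scalar: "X \<in> mat ` {-int n..int n}" if "X \<in> Mat2 (int n)" "X \<in> range mat" for X
    using that mat_in_Mat2_iff by fastforce
  show "(A, B) \<in> mat ` {-int n..int n} \<times> Mat2 (int n) \<union> Mat2 (int n) \<times> mat ` {-int n..int n} \<union>
     lower_pair ` lower_params n \<union> map_prod transpose transpose ` lower_pair ` lower_params n"
  proof (cases "A \<in> range mat \<or> B \<in> range mat")
    case True
    then show ?thesis using Mat2 scalar by blast
  next
    case False
    then consider "A$1$2 = 0" "B$1$2 = 0" | "A$2$1 = 0" "B$2$1 = 0"
      using commuting_nonscalar_triangular \<open>A ** B = B ** A\<close> \<open>A$1$2 * B$1$2 * A$2$1 * B$2$1 = 0\<close>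
      by blast
    then show ?thesis
    proof cases
      case 1
      then have "(A, B) \<in> lower_pair ` lower_params n"
        using AB False by (intro lower_triangular_commuting_pair) auto
      then show ?thesis by blast
    next
      case 2
      have "(transpose A, transpose B) \<in> Gamma (int n)"
        using AB by (auto simp: Gamma_def transpose_in_Mat2_iff matrix_transpose_mul[symmetric])
      moreover have "transpose A \<notin> range mat"
        using False by (metis rangeE transpose_mat transpose_transpose)
      ultimately have "(transpose A, transpose B) \<in> lower_pair ` lower_params n"
        using 2 by (intro lower_triangular_commuting_pair) (auto simp: transpose_def)
      then have "map_prod transpose transpose (transpose A, transpose B)
          \<in> map_prod transpose transpose ` lower_pair ` lower_params n" by blast
      then show ?thesis by simp
    qed
  qed
qed

lemma scalar_pairs_subset_Gamma_diff_Gamma':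
  assumes "N \<ge> 0"
  shows "mat ` {-N..N} \<times> Mat2 N \<union> Mat2 N \<times> mat ` {-N..N} \<subseteq> Gamma N - Gamma' N"
proof -
  have "(mat s :: int^2^2)$1$2 = 0" for s by (simp add: mat_eq_mat2)
  then show ?thesis
    using assms by (auto simp: Gamma_def Gamma'_def mat_in_Mat2_iff mat_mult_commute)
qed

lemma Mat2_eq_image:
  "Mat2 N = (\<lambda>(a, b, c, d). mat2 a b c d) ` ({-N..N} \<times> {-N..N} \<times> {-N..N} \<times> {-N..N})"
proof -
  have "A \<in> (\<lambda>(a, b, c, d). mat2 a b c d) ` ({-N..N} \<times> {-N..N} \<times> {-N..N} \<times> {-N..N})"
    if "A \<in> Mat2 N" for A
  proof (rule image_eqI)
    show "A = (\<lambda>(a, b, c, d). mat2 a b c d) (A$1$1, A$1$2, A$2$1, A$2$2)"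
      using mat2_entries by simp
    have "-N \<le> A$i$j \<and> A$i$j \<le> N" for i j
    proof -
      have "\<bar>A$i$j\<bar> \<le> N" using that by (simp add: Mat2_def)
      then show ?thesis by arith
    qed
    then show "(A$1$1, A$1$2, A$2$1, A$2$2) \<in> {-N..N} \<times> {-N..N} \<times> {-N..N} \<times> {-N..N}"
      by simp
  qed
  then show ?thesis by (auto simp: mat2_in_Mat2_iff abs_le_iff)
qed

lemma finite_Mat2: "finite (Mat2 N)"
  by (simp add: Mat2_eq_image)

lemma card_Mat2: "card (Mat2 (int n)) = (2 * n + 1) ^ 4"
proof -
  have "inj_on (\<lambda>(a, b, c, d). mat2 a b c d) X" for X :: "(int \<times> int \<times> int \<times> int) set"
    by (auto simp: inj_on_def mat2_eq_iff)
  then show ?thesis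
    by (simp add: Mat2_eq_image card_image card_cartesian_product card_symmetric_int_interval
        power4_eq_xxxx del: card_atLeastAtMost_int)
qed

lemma card_mat_image: "card (mat ` {-int n..int n} :: (int^2^2) set) = 2 * n + 1"
proof -
  have "inj (mat :: int \<Rightarrow> int^2^2)"
    by (rule injI) (metis mat2_nth(1) mat_eq_mat2)
  then show ?thesis
    by (simp add: card_image inj_on_subset card_symmetric_int_interval del: card_atLeastAtMost_int)
qed

lemma card_scalar_pairs:
  "card (mat ` {-int n..int n} \<times> Mat2 (int n) \<union> Mat2 (int n) \<times> mat ` {-int n..int n})
     + (2 * n + 1) ^ 2 = 2 * (2 * n + 1) ^ 5"
proof -
  let ?S = "mat ` {-int n..int n} :: (int^2^2) set" and ?M = "Mat2 (int n)"
  define k where "k = 2 * n + 1"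
  have "?S \<subseteq> ?M" by (auto simp: mat_in_Mat2_iff)
  then have inter: "(?S \<times> ?M) \<inter> (?M \<times> ?S) = ?S \<times> ?S" by blast
  have finite: "finite (?S \<times> ?M)" "finite (?M \<times> ?S)" by (simp_all add: finite_Mat2)
  have "card (?S \<times> ?M) + card (?M \<times> ?S) = card (?S \<times> ?M \<union> ?M \<times> ?S) + card (?S \<times> ?S)"
    using card_Un_Int[OF finite] unfolding inter .
  then have "k * k ^ 4 + k ^ 4 * k = card (?S \<times> ?M \<union> ?M \<times> ?S) + k * k"
    by (simp only: card_cartesian_product card_Mat2 card_mat_image flip: k_def)
  moreover have "k * k ^ 4 = k ^ 5" "k ^ 4 * k = k ^ 5"
    by (simp_all add: eval_nat_numeral)
  ultimately show ?thesis
    unfolding k_def[symmetric] power2_eq_square by linarith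
qed

lemma card_Gamma_diff_Gamma'_lower:
  "2 * (2 * n + 1) ^ 5 \<le> card (Gamma (int n) - Gamma' (int n)) + (2 * n + 1) ^ 2"
proof -
  have "finite (Gamma (int n))"
    by (rule finite_subset[of _ "Mat2 (int n) \<times> Mat2 (int n)"]) (auto simp: Gamma_def finite_Mat2)
  then have "card (mat ` {-int n..int n} \<times> Mat2 (int n) \<union> Mat2 (int n) \<times> mat ` {-int n..int n})
      \<le> card (Gamma (int n) - Gamma' (int n))"
    by (intro card_mono scalar_pairs_subset_Gamma_diff_Gamma') auto
  then show ?thesis using card_scalar_pairs[of n] by linarith
qed

lemma card_Gamma_diff_Gamma'_upper:
  "card (Gamma (int n) - Gamma' (int n))
     \<le> 2 * (2 * n + 1) ^ 5 + 2 * ((2 * n + 1) ^ 2 * card (singular_quads (2 * n)))"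
proof -
  let ?S = "mat ` {-int n..int n} :: (int^2^2) set" and ?M = "Mat2 (int n)"
    and ?L = "lower_pair ` lower_params n"
  have finite_params: "finite (lower_params n)"
    by (simp add: lower_params_def finite_singular_quads)
  have "card (Gamma (int n) - Gamma' (int n))
      \<le> card (?S \<times> ?M \<union> ?M \<times> ?S \<union> ?L \<union> map_prod transpose transpose ` ?L)"
    by (intro card_mono Gamma_diff_Gamma'_subset) (simp add: finite_Mat2 finite_params)
  also have "\<dots> \<le> card (?S \<times> ?M \<union> ?M \<times> ?S) + card ?L + card (map_prod transpose transpose ` ?L)"
    using card_Un_le[of "?S \<times> ?M \<union> ?M \<times> ?S" ?L]
      card_Un_le[of "?S \<times> ?M \<union> ?M \<times> ?S \<union> ?L" "map_prod transpose transpose ` ?L"]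
    by linarith
  also have "\<dots> \<le> card (?S \<times> ?M \<union> ?M \<times> ?S) + card (lower_params n) + card (lower_params n)"
    using card_image_le[OF finite_params, of lower_pair]
      card_image_le[OF finite_imageI[OF finite_params], of "map_prod transpose transpose" lower_pair]
    by linarith
  also have "card (lower_params n) = (2 * n + 1) ^ 2 * card (singular_quads (2 * n))"
    by (simp only: lower_params_def card_cartesian_product card_symmetric_int_interval
        power2_eq_square mult.assoc)
  finally show ?thesis using card_scalar_pairs[of n] by linarith
qed

lemma harm_le_1_plus_ln: "n \<ge> 1 \<Longrightarrow> harm n \<le> 1 + ln (real n)"
  using euler_mascheroni_sequence_decreasing[of 1 n] by (simp add: harm_Suc, simp add: harm_def)

lemma card_Gamma_diff_Gamma'_error_le:
  assumes "n \<ge> 1"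
  shows "\<bar>real (card (Gamma (int n) - Gamma' (int n))) - 2 * (2 * real n) ^ 5\<bar>
    \<le> 2 * ((2 * real n + 1) ^ 5 - (2 * real n) ^ 5)
      + (2 * real n + 1) ^ 2 * (1 + 72 * (2 * real n) ^ 2 * (1 + ln (2 * real n)))"
proof -
  define X Q where "X = real (card (Gamma (int n) - Gamma' (int n)))"
    and "Q = real (card (singular_quads (2 * n)))"
  define a b c where "a = (2 * real n + 1) ^ 5" and "b = (2 * real n) ^ 5"
    and "c = (2 * real n + 1) ^ 2"
  define L where "L = 36 * (2 * real n) ^ 2 * (1 + ln (2 * real n))"
  have lower: "2 * a \<le> X + c"
    using card_Gamma_diff_Gamma'_lower[of n] unfolding X_def a_def c_def
    by (metis (mono_tags) of_nat_le_iff of_nat_add of_nat_mult of_nat_power of_nat_numeral of_nat_1)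
  have upper: "X \<le> 2 * a + 2 * (c * Q)"
    using card_Gamma_diff_Gamma'_upper[of n] unfolding X_def Q_def a_def c_def
    by (metis (mono_tags) of_nat_le_iff of_nat_add of_nat_mult of_nat_power of_nat_numeral of_nat_1)
  have "Q \<le> 36 * (2 * real n) ^ 2 * harm (2 * n)"
    using card_singular_quads_le[of "2 * n"] by (simp add: Q_def)
  also have "\<dots> \<le> L"
    unfolding L_def using harm_le_1_plus_ln[of "2 * n"] assms by (intro mult_left_mono) auto
  finally have "c * Q \<le> c * L"
    by (rule mult_left_mono) (simp add: c_def)
  moreover have "0 \<le> c" "0 \<le> c * Q"
    by (simp_all add: c_def Q_def)
  moreover have "b \<le> a"
    unfolding a_def b_def by (rule power_mono) auto
  moreover have rhs: "c * (1 + 72 * (2 * real n) ^ 2 * (1 + ln (2 * real n))) = c + 2 * (c * L)"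
    by (simp add: L_def algebra_simps)
  ultimately show ?thesis
    using lower upper
    unfolding X_def[symmetric] a_def[symmetric] b_def[symmetric] c_def[symmetric] rhs
      right_diff_distrib
    by linarith
qed

theorem proposition2p3:
  shows "(\<lambda>N::nat. real (card (Gamma (int N) - Gamma' (int N))) - 2 * (2 * real N) ^ 5)
           \<in> O(\<lambda>N. real N ^ 4 * ln (real N))"
proof (rule landau_o.big_trans)
  let ?error = "\<lambda>n. 2 * ((2 * real n + 1) ^ 5 - (2 * real n) ^ 5)
    + (2 * real n + 1) ^ 2 * (1 + 72 * (2 * real n) ^ 2 * (1 + ln (2 * real n)))"
  have "\<forall>\<^sub>F n in at_top.
      norm (real (card (Gamma (int n) - Gamma' (int n))) - 2 * (2 * real n) ^ 5) \<le> norm (?error n)"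
    using eventually_ge_at_top[of 1]
  proof eventually_elim
    case (elim n)
    have "norm (real (card (Gamma (int n) - Gamma' (int n))) - 2 * (2 * real n) ^ 5) \<le> ?error n"
      using card_Gamma_diff_Gamma'_error_le[OF elim] by simp
    also have "\<dots> \<le> norm (?error n)"
      by simp
    finally show ?case .
  qed
  then show "(\<lambda>N. real (card (Gamma (int N) - Gamma' (int N))) - 2 * (2 * real N) ^ 5) \<in> O(?error)"
    by (rule landau_o.big_mono)
  show "?error \<in> O(\<lambda>n. real n ^ 4 * ln (real n))"
    by real_asymp
qed

end
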